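(* Let $\omega=(\omega_{n,s})$ be semivalue weights. Consider the two-player unanimity game $v$ on $\{A,B\}$ with $v(\{A,B\})=1$ and $v(T)=0$ for every proper subset $T$. Let provider $A$ split into $k\ge 2$ pseudonyms $A_1,\dots,A_k$, producing the $(k+1)$-player unanimity game $v'$ on $\{A_1,\dots,A_k,B\}$ ($v'(T)=1$ iff $T$ is the whole player set, else $0$). Then the additive split-gain, namely the total semivalue of the pseudonyms in $v'$ minus the semivalue of $A$ in $v$, equals \[\Gamma(\omega,k)=k\,\omega_{k+1,k}-\omega_{2,1},\] and, when $\omega_{2,1}>0$, the multiplicative split-gain (ratio of the pseudonyms' total semivalue in $v'$ to $A$'s semivalue in $v$) is $G(\omega,k)=k\,\omega_{k+1,k}/\omega_{2,1}$. In particular: for Shapley weights, $\Gamma=(k-1)/(2(k+1))>0$ for all $k\ge2$, converging to $1/2$ as $k\to\infty$; for raw Banzhaf weights, $\Gamma=k\,2^{-k}-1/2$, which is zero at $k=2$ and negative for all $k\ge3$; for Beta-Shapley the gain is obtained by substituting its weights into the general formula. Furthermore, for the $n$-player unanimity game ($v_n([n])=1$, $v_n=0$ on proper subsets) in which one player splits into $k$ pseudonyms, producing the $(n+k-1)$-player unanimity game, the Shapley multiplicative split-gain is $G_{\mathrm{Sh}}(n,k)=nk/(n+k-1)$, which is strictly greater than $1$ for all $n,k\ge2$.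
   Context: A semivalue with weights $\omega$ assigns to player $k$ in a game $w$ on $[K]$ the value $\varphi_k^\omega(w)=\sum_{Q\subseteq[K]\setminus\{k\}}\omega_{K,|Q|}\,[w(Q\cup\{k\})-w(Q)]$, where $\omega_{K,s}\ge0$ and $\sum_{s=0}^{K-1}\binom{K-1}{s}\omega_{K,s}=1$. Shapley weights are $\omega_{K,s}=1/(K\binom{K-1}{s})$; raw Banzhaf weights are $\omega_{K,s}=2^{-(K-1)}$; Beta-Shapley weights are a parametric coalition-size reweighting. *)

theory Defs
  imports Complex_Main
begin

text \<open>Semivalue weights: omega K s for a K-player game and coalition size s.\<close>
definition semivalue_weights :: "(nat \<Rightarrow> nat \<Rightarrow> real) \<Rightarrow> bool" where
  "semivalue_weights \<omega> \<longleftrightarrow>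
     (\<forall>K s. 0 \<le> \<omega> K s) \<and>
     (\<forall>K\<ge>1. (\<Sum>s<K. real (K - 1 choose s) * \<omega> K s) = 1)"

definition shapley_weights :: "nat \<Rightarrow> nat \<Rightarrow> real" where
  "shapley_weights K s = 1 / (real K * real (K - 1 choose s))"

definition banzhaf_weights :: "nat \<Rightarrow> nat \<Rightarrow> real" where
  "banzhaf_weights K s = 1 / 2 ^ (K - 1)"

definition semivalue :: "(nat \<Rightarrow> nat \<Rightarrow> real) \<Rightarrow> 'a set \<Rightarrow> ('a set \<Rightarrow> real) \<Rightarrow> 'a \<Rightarrow> real" where
  "semivalue \<omega> N w i =
     (\<Sum>Q\<in>Pow (N - {i}). \<omega> (card N) (card Q) * (w (insert i Q) - w Q))"

definition unanimity :: "'a set \<Rightarrow> 'a set \<Rightarrow> real" where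
  "unanimity N T = (if T = N then 1 else 0)"

text \<open>n-player unanimity game on players {0..<n}; player n-1 splits into k pseudonyms
  n-1, ..., n+k-2, giving the (n+k-1)-player unanimity game on {0..<n+k-1}.\<close>
definition orig_value :: "(nat \<Rightarrow> nat \<Rightarrow> real) \<Rightarrow> nat \<Rightarrow> real" where
  "orig_value \<omega> n = semivalue \<omega> {0..<n} (unanimity {0..<n}) (n - 1)"

definition split_total :: "(nat \<Rightarrow> nat \<Rightarrow> real) \<Rightarrow> nat \<Rightarrow> nat \<Rightarrow> real" where
  "split_total \<omega> n k =
     (\<Sum>i\<in>{n - 1..<n + k - 1}. semivalue \<omega> {0..<n + k - 1} (unanimity {0..<n + k - 1}) i)"

definition add_split_gain :: "(nat \<Rightarrow> nat \<Rightarrow> real) \<Rightarrow> nat \<Rightarrow> nat \<Rightarrow> real" where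
  "add_split_gain \<omega> n k = split_total \<omega> n k - orig_value \<omega> n"

definition mult_split_gain :: "(nat \<Rightarrow> nat \<Rightarrow> real) \<Rightarrow> nat \<Rightarrow> nat \<Rightarrow> real" where
  "mult_split_gain \<omega> n k = split_total \<omega> n k / orig_value \<omega> n"

end

theory Submission
  imports Defs "HOL-Real_Asymp.Real_Asymp"
begin

text \<open>In a unanimity game a player's marginal contribution is nonzero only to the coalition of
  all other players, so every player receives the single weight \<open>\<omega> K (K - 1)\<close>. After the split,
  the \<open>k\<close> pseudonyms together receive \<open>k \<omega> (n + k - 1) (n + k - 2)\<close> instead of \<open>\<omega> n (n - 1)\<close>. For Shapley weights this compares
  \<open>k / (n + k - 1)\<close> with \<open>1 / n\<close>, and \<open>n + k - 1 < n k\<close> for \<open>n, k \<ge> 2\<close>.\<close>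

lemma unanimity_marginal:
  assumes "i \<in> N" "Q \<subseteq> N - {i}"
  shows "unanimity N (insert i Q) - unanimity N Q = (if Q = N - {i} then 1 else 0)"
  using assms by (auto simp: unanimity_def)

lemma semivalue_unanimity:
  assumes "finite N" "i \<in> N"
  shows "semivalue \<omega> N (unanimity N) i = \<omega> (card N) (card N - 1)"
proof -
  have "semivalue \<omega> N (unanimity N) i =
        (\<Sum>Q\<in>Pow (N - {i}). if Q = N - {i} then \<omega> (card N) (card Q) else 0)"
    unfolding semivalue_def
    by (rule sum.cong) (simp_all add: unanimity_marginal[OF assms(2)])
  also have "\<dots> = \<omega> (card N) (card (N - {i}))"
    using assms(1) by simp
  finally show ?thesis
    using assms by simp
qed

lemma orig_value_eq:
  assumes "n \<ge> 1"
  shows "orig_value \<omega> n = \<omega> n (n - 1)"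
  unfolding orig_value_def using assms by (subst semivalue_unanimity) auto

lemma split_total_eq:
  assumes "n \<ge> 1"
  shows "split_total \<omega> n k = real k * \<omega> (n + k - 1) (n + k - 2)"
proof -
  have "split_total \<omega> n k = (\<Sum>i\<in>{n - 1..<n + k - 1}. \<omega> (n + k - 1) (n + k - 2))"
    unfolding split_total_def
    by (rule sum.cong) (use assms in \<open>auto simp: semivalue_unanimity numeral_2_eq_2\<close>)
  then show ?thesis
    using assms by simp
qed

lemma add_split_gain_eq:
  assumes "n \<ge> 1"
  shows "add_split_gain \<omega> n k = real k * \<omega> (n + k - 1) (n + k - 2) - \<omega> n (n - 1)"
  using assms by (simp add: add_split_gain_def orig_value_eq split_total_eq)

lemma mult_split_gain_eq:
  assumes "n \<ge> 1"
  shows "mult_split_gain \<omega> n k = real k * \<omega> (n + k - 1) (n + k - 2) / \<omega> n (n - 1)"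
  using assms by (simp add: mult_split_gain_def orig_value_eq split_total_eq)

lemma add_split_gain_two_players:
  "add_split_gain \<omega> 2 k = real k * \<omega> (k + 1) k - \<omega> 2 1"
  by (simp add: add_split_gain_eq)

lemma mult_split_gain_two_players:
  "mult_split_gain \<omega> 2 k = real k * \<omega> (k + 1) k / \<omega> 2 1"
  by (simp add: mult_split_gain_eq)

lemma shapley_weights_all_others: "shapley_weights (Suc m) m = 1 / real (Suc m)"
  by (simp add: shapley_weights_def)

lemma orig_value_shapley:
  assumes "n \<ge> 1"
  shows "orig_value shapley_weights n = 1 / real n"
  using assms by (cases n) (simp_all add: orig_value_eq shapley_weights_all_others)

lemma split_total_shapley:
  assumes "n \<ge> 1"
  shows "split_total shapley_weights n k = real k / (real n + real k - 1)"
proof (cases k)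
  case (Suc j)
  obtain m where "n = Suc m"
    using assms by (cases n) auto
  then show ?thesis
    using Suc by (simp add: split_total_eq shapley_weights_all_others)
qed (simp add: split_total_def)

lemma add_split_gain_shapley_two_players:
  "add_split_gain shapley_weights 2 k = (real k - 1) / (2 * (real k + 1))"
  by (simp add: add_split_gain_def split_total_shapley orig_value_shapley field_simps)

lemma mult_split_gain_shapley:
  assumes "n \<ge> 1"
  shows "mult_split_gain shapley_weights n k = real n * real k / (real n + real k - 1)"
  using assms by (simp add: mult_split_gain_def split_total_shapley orig_value_shapley)

lemma add_split_gain_banzhaf_two_players:
  "add_split_gain banzhaf_weights 2 k = real k / 2 ^ k - 1 / 2"
  by (simp add: add_split_gain_two_players banzhaf_weights_def)

lemma double_less_power_two:
  assumes "k \<ge> 3"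
  shows "2 * k < (2::nat) ^ k"
  using assms by (induction k rule: dec_induct) simp_all

lemma sum_minus_one_less_mult:
  fixes x y :: real
  assumes "x > 1" "y > 1"
  shows "x + y - 1 < x * y"
proof -
  have "(x - 1) * (y - 1) > 0"
    using assms by simp
  then show ?thesis
    by (simp add: algebra_simps)
qed

theorem proposition1:
  shows
    "(\<forall>\<omega> k. semivalue_weights \<omega> \<longrightarrow> k \<ge> 2 \<longrightarrow>
        add_split_gain \<omega> 2 k = real k * \<omega> (k + 1) k - \<omega> 2 1 \<and>
        (\<omega> 2 1 > 0 \<longrightarrow> mult_split_gain \<omega> 2 k = real k * \<omega> (k + 1) k / \<omega> 2 1))
     \<and> (\<forall>k\<ge>2. add_split_gain shapley_weights 2 k = (real k - 1) / (2 * (real k + 1))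
               \<and> add_split_gain shapley_weights 2 k > 0)
     \<and> (\<lambda>k. add_split_gain shapley_weights 2 k) \<longlonglongrightarrow> 1 / 2
     \<and> (\<forall>k\<ge>2. add_split_gain banzhaf_weights 2 k = real k / 2 ^ k - 1 / 2)
     \<and> add_split_gain banzhaf_weights 2 2 = 0
     \<and> (\<forall>k\<ge>3. add_split_gain banzhaf_weights 2 k < 0)
     \<and> (\<forall>n\<ge>2. \<forall>k\<ge>2. mult_split_gain shapley_weights n k = real n * real k / (real n + real k - 1)
               \<and> mult_split_gain shapley_weights n k > 1)"
proof (intro conjI allI impI)
  fix \<omega> :: "nat \<Rightarrow> nat \<Rightarrow> real" and k :: nat
  show "add_split_gain \<omega> 2 k = real k * \<omega> (k + 1) k - \<omega> 2 1"
    by (rule add_split_gain_two_players)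
  show "mult_split_gain \<omega> 2 k = real k * \<omega> (k + 1) k / \<omega> 2 1"
    by (rule mult_split_gain_two_players)
next
  fix k :: nat
  assume "k \<ge> 2"
  then show "add_split_gain shapley_weights 2 k > 0"
    by (simp add: add_split_gain_shapley_two_players)
next
  show "(\<lambda>k. add_split_gain shapley_weights 2 k) \<longlonglongrightarrow> 1 / 2"
    unfolding add_split_gain_shapley_two_players by real_asymp
next
  fix k :: nat
  assume "k \<ge> 3"
  then have "2 * real k < 2 ^ k"
    using double_less_power_two[of k] by (metis of_nat_less_iff of_nat_mult of_nat_numeral of_nat_power)
  then show "add_split_gain banzhaf_weights 2 k < 0"
    by (simp add: add_split_gain_banzhaf_two_players field_simps)
next
  fix n k :: nat
  assume "n \<ge> 2" "k \<ge> 2"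
  then show "mult_split_gain shapley_weights n k > 1"
    using sum_minus_one_less_mult[of "real n" "real k"] by (simp add: mult_split_gain_shapley)
qed (simp_all add: add_split_gain_shapley_two_players add_split_gain_banzhaf_two_players
    mult_split_gain_shapley)

end
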